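(* Let $\mathbf w\in\mathbb R^m$ and let $X,Y$ be distinct candidates. The following are equivalent: (i) for all profiles $\mathbf p,\mathbf q\in P$ with $\mathbf p\sim_{X,Y}\mathbf q$, $\mathbf p\cdot\mathbf v_{X>Y}>0$ implies $\mathbf q\cdot\mathbf v_{X>Y}>0$; (ii) every $T\in SO(P)$ with $T(\mathbf r_{X>Y})=\mathbf r_{X>Y}$ satisfies $T\big((\mathbf v_{X>Y})_+\big)\subseteq(\mathbf v_{X>Y})_+$.
   Context: Fix an integer $n\ge 2$ and a set $\mathbf C$ of $n$ candidates. Fix a composition $\lambda=(\lambda_1,\dots,\lambda_m)$ of $n$ (positive integers with $\sum_i\lambda_i=n$), write $|\lambda|=m$ and $[m]=\{1,\dots,m\}$. A ballot is a function $b:\mathbf C\to[m]$ with $|b^{-1}(i)|=\lambda_i$ for every $i$; $\mathbf C_\lambda$ denotes the set of ballots. The profile space is $P=\mathbb R^{\mathbf C_\lambda}$ with basis $\{\delta_b\}$ (indicator functions) and inner product $\mathbf p\cdot\mathbf q=\sum_b\mathbf p(b)\mathbf q(b)$; $\mathbf 1=\sum_b\delta_b$. For candidates $X,Y$: $\mathbf a_{X>Y}=\sum_{b:\,b(X)<b(Y)}\delta_b$, $\mathbf r_{X>Y}=\mathbf a_{X>Y}-\mathbf a_{Y>X}$. For $\mathbf w\in\mathbb R^m$ (a function $[m]\to\mathbb R$), $\mathbf v_X\in P$ is $\mathbf v_X(b)=\mathbf w(b(X))$ and $\mathbf v_{X>Y}=\mathbf v_X-\mathbf v_Y$. For $\mathbf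 v\in P$, $(\mathbf v)_+=\{\mathbf u\in P:\mathbf u\cdot\mathbf v>0\}$. Two profiles are $X,Y$-equivalent, $\mathbf p\sim_{X,Y}\mathbf q$, if $(\mathbf p-\mathbf q)\cdot\mathbf a_{X>Y}=0$ and $(\mathbf p-\mathbf q)\cdot\mathbf a_{Y>X}=0$. $SO(P)$ denotes the group of linear isometries of $P$ of determinant $1$. *)

theory Defs
  imports "HOL-Analysis.Analysis"
begin

text \<open>A composition lambda of n is a
list of positive naturals with sum n; m = length lambda and [m] = {1..m}.
A ballot is a function b :: 'c => nat with b x in {1..m} for x in C, b x = 0 outside C
(extensional convention) and |b^-1(i)| = lambda_i.\<close>

definition is_composition :: "nat list \<Rightarrow> nat \<Rightarrow> bool" where
  "is_composition lam n \<longleftrightarrow> (\<forall>i\<in>set lam. 0 < i) \<and> sum_list lam = n"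

definition ballots :: "'c set \<Rightarrow> nat list \<Rightarrow> ('c \<Rightarrow> nat) set" where
  "ballots C lam = {b. (\<forall>x\<in>C. b x \<in> {1..length lam}) \<and> (\<forall>x. x \<notin> C \<longrightarrow> b x = 0)
      \<and> (\<forall>i\<in>{1..length lam}. card {x\<in>C. b x = i} = lam ! (i - 1))}"

text \<open>Profile space P = R^{C_lambda}: real functions on ballots, zero outside the ballot set.\<close>

type_synonym 'c profile = "('c \<Rightarrow> nat) \<Rightarrow> real"

definition profiles :: "'c set \<Rightarrow> nat list \<Rightarrow> 'c profile set" where
  "profiles C lam = {p. \<forall>b. b \<notin> ballots C lam \<longrightarrow> p b = 0}"

definition pinner :: "'c set \<Rightarrow> nat list \<Rightarrow> 'c profile \<Rightarrow> 'c profile \<Rightarrow> real" where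
  "pinner C lam p q = (\<Sum>b\<in>ballots C lam. p b * q b)"

definition delta :: "'c set \<Rightarrow> nat list \<Rightarrow> ('c \<Rightarrow> nat) \<Rightarrow> 'c profile" where
  "delta C lam b = (\<lambda>b'. if b' = b \<and> b \<in> ballots C lam then 1 else 0)"

definition avec :: "'c set \<Rightarrow> nat list \<Rightarrow> 'c \<Rightarrow> 'c \<Rightarrow> 'c profile" where
  "avec C lam X Y = (\<lambda>b. if b \<in> ballots C lam \<and> b X < b Y then 1 else 0)"

definition rvec :: "'c set \<Rightarrow> nat list \<Rightarrow> 'c \<Rightarrow> 'c \<Rightarrow> 'c profile" where
  "rvec C lam X Y = (\<lambda>b. avec C lam X Y b - avec C lam Y X b)"

text \<open>w : [m] -> R is represented as a function nat => real; only its values on {1..m} matter.\<close>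

definition vcand :: "'c set \<Rightarrow> nat list \<Rightarrow> (nat \<Rightarrow> real) \<Rightarrow> 'c \<Rightarrow> 'c profile" where
  "vcand C lam w X = (\<lambda>b. if b \<in> ballots C lam then w (b X) else 0)"

definition vpair :: "'c set \<Rightarrow> nat list \<Rightarrow> (nat \<Rightarrow> real) \<Rightarrow> 'c \<Rightarrow> 'c \<Rightarrow> 'c profile" where
  "vpair C lam w X Y = (\<lambda>b. vcand C lam w X b - vcand C lam w Y b)"

definition posHalf :: "'c set \<Rightarrow> nat list \<Rightarrow> 'c profile \<Rightarrow> 'c profile set" where
  "posHalf C lam v = {u \<in> profiles C lam. pinner C lam u v > 0}"

definition equivXY :: "'c set \<Rightarrow> nat list \<Rightarrow> 'c \<Rightarrow> 'c \<Rightarrow> 'c profile \<Rightarrow> 'c profile \<Rightarrow> bool" where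
  "equivXY C lam X Y p q \<longleftrightarrow>
     pinner C lam (\<lambda>b. p b - q b) (avec C lam X Y) = 0 \<and>
     pinner C lam (\<lambda>b. p b - q b) (avec C lam Y X) = 0"

definition plinear :: "'c set \<Rightarrow> nat list \<Rightarrow> ('c profile \<Rightarrow> 'c profile) \<Rightarrow> bool" where
  "plinear C lam T \<longleftrightarrow> (\<forall>p\<in>profiles C lam. T p \<in> profiles C lam) \<and>
     (\<forall>p\<in>profiles C lam. \<forall>q\<in>profiles C lam. \<forall>c::real.
        T (\<lambda>b. c * p b + q b) = (\<lambda>b. c * T p b + T q b))"

definition pdet :: "'c set \<Rightarrow> nat list \<Rightarrow> ('c profile \<Rightarrow> 'c profile) \<Rightarrow> real" where
  "pdet C lam T = (\<Sum>\<sigma> | \<sigma> permutes ballots C lam.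
      of_int (sign \<sigma>) * (\<Prod>b\<in>ballots C lam. T (delta C lam (\<sigma> b)) b))"

definition SO_P :: "'c set \<Rightarrow> nat list \<Rightarrow> ('c profile \<Rightarrow> 'c profile) set" where
  "SO_P C lam = {T. plinear C lam T \<and>
      (\<forall>p\<in>profiles C lam. \<forall>q\<in>profiles C lam.
         pinner C lam (\<lambda>b. T p b - T q b) (\<lambda>b. T p b - T q b)
           = pinner C lam (\<lambda>b. p b - q b) (\<lambda>b. p b - q b)) \<and>
      pdet C lam T = 1}"

end

theory Submission
  imports Defs
begin

text \<open>Both conditions say that \<open>v\<^sub>X\<^sub>>\<^sub>Y\<close> is a scalar multiple of \<open>r\<^sub>X\<^sub>>\<^sub>Y\<close>. Since exchanging
the positions of X and Y maps ballots to ballots and negates both vectors, this happens exactly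
when \<open>w(b X) - w(b Y)\<close> takes the same value on all ballots ranking X above Y. A multiple of
\<open>r\<^sub>X\<^sub>>\<^sub>Y = a\<^sub>X\<^sub>>\<^sub>Y - a\<^sub>Y\<^sub>>\<^sub>X\<close> sees only the two quantities fixed by \<open>\<sim>\<^sub>X\<^sub>,\<^sub>Y\<close>, and is preserved
by isometries fixing \<open>r\<^sub>X\<^sub>>\<^sub>Y\<close>. Conversely, if two such ballots \<open>b\<^sub>1, b\<^sub>2\<close> have different values,
the dipole \<open>d(\<delta>\<^sub>b\<^sub>1 - \<delta>\<^sub>b\<^sub>2)\<close> with \<open>d = v(b\<^sub>1) - v(b\<^sub>2)\<close> pairs positively with \<open>v\<^sub>X\<^sub>>\<^sub>Y\<close> while being
X,Y-equivalent to 0, and the even permutation of ballots exchanging \<open>b\<^sub>1, b\<^sub>2\<close> and also their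
X,Y-swapped images fixes \<open>r\<^sub>X\<^sub>>\<^sub>Y\<close> but negates the dipole.\<close>

lemma finite_ballots: "finite C \<Longrightarrow> finite (ballots C lam)"
proof -
  assume "finite C"
  have "ballots C lam \<subseteq> {f. \<forall>x. (x \<in> C \<longrightarrow> f x \<in> {1..length lam}) \<and> (x \<notin> C \<longrightarrow> f x = 0)}"
    unfolding ballots_def by auto
  then show ?thesis
    using finite_set_of_finite_funs[OF \<open>finite C\<close>, of "{1..length lam}" 0]
    by (meson finite_atLeastAtMost finite_subset)
qed

lemma ballot_comp_transpose:
  assumes "X \<in> C" "Y \<in> C" "b \<in> ballots C lam"
  shows "b \<circ> Transposition.transpose X Y \<in> ballots C lam"
proof -
  let ?t = "Transposition.transpose X Y"
  have t_in: "?t x \<in> C" if "x \<in> C" for x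
    using assms that by (auto simp: Transposition.transpose_def)
  have t_out: "?t x = x" if "x \<notin> C" for x
    using assms that by (auto simp: Transposition.transpose_def)
  have "{x\<in>C. (b \<circ> ?t) x = i} = ?t ` {x\<in>C. b x = i}" for i
  proof
    show "{x\<in>C. (b \<circ> ?t) x = i} \<subseteq> ?t ` {x\<in>C. b x = i}"
    proof
      fix x assume "x \<in> {x\<in>C. (b \<circ> ?t) x = i}"
      then have "?t x \<in> {x\<in>C. b x = i}" using t_in by auto
      then show "x \<in> ?t ` {x\<in>C. b x = i}" by (metis image_eqI transpose_involutory)
    qed
  qed (use t_in in auto)
  moreover have "inj ?t" by (meson inj_on_inverseI transpose_involutory)
  ultimately have "card {x\<in>C. (b \<circ> ?t) x = i} = card {x\<in>C. b x = i}" for i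
    by (simp add: card_image inj_on_subset)
  then show ?thesis using assms(3) t_in t_out unfolding ballots_def by auto
qed

lemma pinner_diff_self:
  "pinner C lam (\<lambda>b. f b - g b) (\<lambda>b. f b - g b)
     = pinner C lam f f - 2 * pinner C lam f g + pinner C lam g g"
  unfolding pinner_def by (simp add: algebra_simps sum.distrib sum_subtractf sum_distrib_left)

lemma SO_P_pinner:
  fixes T :: "'a profile \<Rightarrow> 'a profile"
  assumes T: "T \<in> SO_P C lam" and p: "p \<in> profiles C lam" and q: "q \<in> profiles C lam"
  shows "pinner C lam (T p) (T q) = pinner C lam p q"
proof -
  define z where "z = ((\<lambda>_. 0) :: 'a profile)"
  have zero: "z \<in> profiles C lam" by (simp add: profiles_def z_def)
  have lin: "plinear C lam T"
    and iso: "\<And>p q. p \<in> profiles C lam \<Longrightarrow> q \<in> profiles C lam \<Longrightarrow>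
      pinner C lam (\<lambda>b. T p b - T q b) (\<lambda>b. T p b - T q b) = pinner C lam (\<lambda>b. p b - q b) (\<lambda>b. p b - q b)"
    using T unfolding SO_P_def by auto
  have "T (\<lambda>b. (-1) * z b + z b) = (\<lambda>b. (-1) * T z b + T z b)"
    using lin zero unfolding plinear_def by blast
  then have T0: "T z = z" by (simp add: z_def)
  have norm: "pinner C lam (T x) (T x) = pinner C lam x x" if "x \<in> profiles C lam" for x
    using iso[OF that zero] unfolding T0 by (simp add: z_def)
  show ?thesis
    using iso[OF p q] norm[OF p] norm[OF q] by (simp add: pinner_diff_self)
qed

lemma permutation_in_SO_P:
  assumes fin: "finite (ballots C lam)" and \<pi>: "\<pi> permutes ballots C lam" and even: "sign \<pi> = 1"
  shows "(\<lambda>p b. p (\<pi> b)) \<in> SO_P C lam"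
proof -
  let ?B = "ballots C lam"
  let ?T = "\<lambda>(p::'a profile) b. p (\<pi> b)"
  have "plinear C lam ?T"
    unfolding plinear_def profiles_def using permutes_not_in[OF \<pi>] by auto
  moreover have "pinner C lam (\<lambda>b. ?T p b - ?T q b) (\<lambda>b. ?T p b - ?T q b)
      = pinner C lam (\<lambda>b. p b - q b) (\<lambda>b. p b - q b)" for p q
    unfolding pinner_def using sum.permute[OF \<pi>, of "\<lambda>b. (p b - q b) * (p b - q b)"]
    by (simp add: o_def)
  moreover have "pdet C lam ?T = 1"
  proof -
    have diag: "(\<Prod>b\<in>?B. ?T (delta C lam (\<tau> b)) b) = (if \<tau> = \<pi> then 1 else 0)"
      if \<tau>: "\<tau> permutes ?B" for \<tau>
    proof (cases "\<tau> = \<pi>")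
      case True
      then show ?thesis using permutes_in_image[OF \<pi>] by (simp add: delta_def)
    next
      case False
      then obtain x where x: "\<tau> x \<noteq> \<pi> x" by auto
      then have "x \<in> ?B" using permutes_not_in[OF \<pi>] permutes_not_in[OF \<tau>] by metis
      with x fin False show ?thesis by (simp add: prod_zero delta_def) (metis)
    qed
    have "pdet C lam ?T = (\<Sum>\<tau> | \<tau> permutes ?B. if \<tau> = \<pi> then of_int (sign \<tau>) else 0)"
      unfolding pdet_def by (rule sum.cong) (auto simp: diag)
    also have "\<dots> = 1"
      using \<pi> even by (simp add: sum.delta' finite_permutations fin)
    finally show ?thesis .
  qed
  ultimately show ?thesis unfolding SO_P_def by blast
qed

definition dipole :: "('c \<Rightarrow> nat) \<Rightarrow> ('c \<Rightarrow> nat) \<Rightarrow> real \<Rightarrow> 'c profile" where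
  "dipole b1 b2 d = (\<lambda>b. if b = b1 then d else if b = b2 then - d else 0)"

lemma dipole_in_profiles:
  "b1 \<in> ballots C lam \<Longrightarrow> b2 \<in> ballots C lam \<Longrightarrow> dipole b1 b2 d \<in> profiles C lam"
  unfolding dipole_def profiles_def by auto

lemma pinner_dipole:
  assumes "finite (ballots C lam)" "b1 \<in> ballots C lam" "b2 \<in> ballots C lam" "b1 \<noteq> b2"
  shows "pinner C lam (dipole b1 b2 d) g = d * (g b1 - g b2)"
proof -
  have "pinner C lam (dipole b1 b2 d) g
      = (\<Sum>b\<in>ballots C lam. (if b = b1 then d * g b1 else 0) + (if b = b2 then - d * g b2 else 0))"
    unfolding pinner_def dipole_def by (rule sum.cong) (use assms in auto)
  also have "\<dots> = d * (g b1 - g b2)"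
    using assms by (simp add: sum.distrib algebra_simps)
  finally show ?thesis .
qed

lemma pinner_dipole_sign:
  assumes "finite (ballots C lam)" "b1 \<in> ballots C lam" "b2 \<in> ballots C lam" "g b1 \<noteq> g b2"
  shows "pinner C lam (dipole b1 b2 (g b1 - g b2)) g > 0"
    and "pinner C lam (dipole b2 b1 (g b1 - g b2)) g < 0"
proof -
  from assms(4) have "b1 \<noteq> b2" by blast
  moreover have "(g b1 - g b2) * (g b1 - g b2) > 0"
    using assms(4) by (simp flip: power2_eq_square)
  ultimately show "pinner C lam (dipole b1 b2 (g b1 - g b2)) g > 0"
    and "pinner C lam (dipole b2 b1 (g b1 - g b2)) g < 0"
    using assms(1-3) by (simp_all add: pinner_dipole right_diff_distrib')
qed

definition const_on_X_above_Y :: "'c set \<Rightarrow> nat list \<Rightarrow> 'c \<Rightarrow> 'c \<Rightarrow> 'c profile \<Rightarrow> bool" where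
  "const_on_X_above_Y C lam X Y f \<longleftrightarrow>
     (\<forall>b1\<in>ballots C lam. \<forall>b2\<in>ballots C lam. b1 X < b1 Y \<longrightarrow> b2 X < b2 Y \<longrightarrow> f b1 = f b2)"

lemma rvec_on_ballots:
  "b \<in> ballots C lam \<Longrightarrow>
     rvec C lam X Y b = (if b X < b Y then 1 else if b Y < b X then -1 else 0)"
  by (simp add: rvec_def avec_def)

lemma vpair_on_ballots:
  "b \<in> ballots C lam \<Longrightarrow> vpair C lam w X Y b = w (b X) - w (b Y)"
  by (simp add: vpair_def vcand_def)

lemma vpair_proportional_rvec:
  assumes XY: "X \<in> C" "Y \<in> C" and const: "const_on_X_above_Y C lam X Y (vpair C lam w X Y)"
  shows "\<exists>c. \<forall>b\<in>ballots C lam. vpair C lam w X Y b = c * rvec C lam X Y b"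
proof -
  let ?B = "ballots C lam" and ?v = "vpair C lam w X Y" and ?r = "rvec C lam X Y"
  have swap: "b \<circ> Transposition.transpose X Y \<in> ?B"
    "(b \<circ> Transposition.transpose X Y) X = b Y" "(b \<circ> Transposition.transpose X Y) Y = b X"
    if "b \<in> ?B" for b
    using ballot_comp_transpose[OF XY that] by simp_all
  show ?thesis
  proof (cases "\<exists>b0\<in>?B. b0 X < b0 Y")
    case True
    then obtain b0 where b0: "b0 \<in> ?B" "b0 X < b0 Y" by blast
    have "?v b = ?v b0 * ?r b" if b: "b \<in> ?B" for b
    proof -
      consider "b X < b Y" | "b Y < b X" | "b X = b Y" by linarith
      then show ?thesis
      proof cases
        case 1
        then have "?v b = ?v b0" using const b b0 unfolding const_on_X_above_Y_def by blast
        then show ?thesis using 1 b by (simp add: rvec_on_ballots)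
      next
        case 2
        let ?b' = "b \<circ> Transposition.transpose X Y"
        have "?b' X < ?b' Y" using 2 swap[OF b] by simp
        then have "?v ?b' = ?v b0"
          using const swap(1)[OF b] b0 unfolding const_on_X_above_Y_def by blast
        moreover have "?v ?b' = - ?v b"
          using vpair_on_ballots[OF swap(1)[OF b]] vpair_on_ballots[OF b] swap(2,3)[OF b]
          by (simp only:)
        ultimately show ?thesis using 2 b by (simp add: rvec_on_ballots)
      next
        case 3
        then show ?thesis using b by (simp add: rvec_on_ballots vpair_on_ballots)
      qed
    qed
    then show ?thesis by blast
  next
    case False
    have "?v b = 0 * ?r b" if b: "b \<in> ?B" for b
    proof -
      have "\<not> b X < b Y" "\<not> b Y < b X" using False b swap[OF b] by auto
      then have "b X = b Y" by simp
      then show ?thesis using b by (simp add: vpair_on_ballots)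
    qed
    then show ?thesis by blast
  qed
qed

lemma equivXY_pinner_eq:
  assumes c: "\<forall>b\<in>ballots C lam. v b = c * rvec C lam X Y b" and e: "equivXY C lam X Y p q"
  shows "pinner C lam p v = pinner C lam q v"
proof -
  let ?a1 = "avec C lam X Y" and ?a2 = "avec C lam Y X"
  have "pinner C lam p v - pinner C lam q v = (\<Sum>b\<in>ballots C lam. (p b - q b) * v b)"
    unfolding pinner_def by (simp add: sum_subtractf[symmetric] left_diff_distrib)
  also have "\<dots> = (\<Sum>b\<in>ballots C lam. c * ((p b - q b) * ?a1 b) - c * ((p b - q b) * ?a2 b))"
    by (rule sum.cong) (auto simp: c rvec_def algebra_simps)
  also have "\<dots> = c * pinner C lam (\<lambda>b. p b - q b) ?a1 - c * pinner C lam (\<lambda>b. p b - q b) ?a2"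
    unfolding pinner_def by (simp add: sum_subtractf sum_distrib_left)
  also have "\<dots> = 0" using e unfolding equivXY_def by simp
  finally show ?thesis by simp
qed

lemma SO_P_fixing_rvec_pinner:
  assumes c: "\<forall>b\<in>ballots C lam. v b = c * rvec C lam X Y b"
    and T: "T \<in> SO_P C lam" "T (rvec C lam X Y) = rvec C lam X Y" and u: "u \<in> profiles C lam"
  shows "pinner C lam (T u) v = pinner C lam u v"
proof -
  let ?r = "rvec C lam X Y"
  have v: "pinner C lam f v = c * pinner C lam f ?r" for f
    unfolding pinner_def sum_distrib_left by (rule sum.cong) (auto simp: c)
  have "?r \<in> profiles C lam" by (simp add: profiles_def rvec_def avec_def)
  have "pinner C lam (T u) v = c * pinner C lam (T u) (T ?r)" using T(2) by (simp add: v)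
  also have "\<dots> = c * pinner C lam u ?r" using SO_P_pinner[OF T(1) u \<open>?r \<in> profiles C lam\<close>] by simp
  finally show ?thesis by (simp add: v)
qed

lemma equivXY_dipole_zero:
  assumes "b1 \<in> ballots C lam" "b2 \<in> ballots C lam" "b1 \<noteq> b2" "b1 X < b1 Y" "b2 X < b2 Y"
    and "finite (ballots C lam)"
  shows "equivXY C lam X Y (dipole b1 b2 d) (\<lambda>_. 0)"
  using assms by (simp add: equivXY_def pinner_dipole avec_def)

lemma SO_P_fixing_rvec_swapping_dipole:
  assumes fin: "finite C" and XY: "X \<in> C" "Y \<in> C"
    and b: "b1 \<in> ballots C lam" "b2 \<in> ballots C lam" "b1 \<noteq> b2" "b1 X < b1 Y" "b2 X < b2 Y"
  shows "\<exists>T\<in>SO_P C lam. T (rvec C lam X Y) = rvec C lam X Y \<and> T (dipole b1 b2 d) = dipole b2 b1 d"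
proof -
  let ?B = "ballots C lam" and ?r = "rvec C lam X Y" and ?t = "Transposition.transpose X Y"
  define s1 where "s1 = b1 \<circ> ?t"
  define s2 where "s2 = b2 \<circ> ?t"
  have s: "s1 \<in> ?B" "s2 \<in> ?B" "s1 Y < s1 X" "s2 Y < s2 X"
    unfolding s1_def s2_def using ballot_comp_transpose[OF XY] b by auto
  have "s1 \<circ> ?t = b1" "s2 \<circ> ?t = b2"
    by (simp_all add: s1_def s2_def comp_assoc)
  then have "s1 \<noteq> s2" using b(3) by auto
  have "b1 \<noteq> s1" "b1 \<noteq> s2" "b2 \<noteq> s1" "b2 \<noteq> s2"
    using s(3,4) b(4,5) by auto
  define \<pi> where "\<pi> = Transposition.transpose b1 b2 \<circ> Transposition.transpose s1 s2"
  have \<pi>_eq: "\<pi> b =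
      (if b = b1 then b2 else if b = b2 then b1 else if b = s1 then s2 else if b = s2 then s1 else b)"
    for b unfolding \<pi>_def using b(3) \<open>s1 \<noteq> s2\<close> \<open>b1 \<noteq> s1\<close> \<open>b1 \<noteq> s2\<close> \<open>b2 \<noteq> s1\<close> \<open>b2 \<noteq> s2\<close>
    by (simp add: Transposition.transpose_def)
  have "\<pi> permutes ?B"
    unfolding \<pi>_def by (rule permutes_compose[OF permutes_swap_id[OF s(1,2)] permutes_swap_id[OF b(1,2)]])
  moreover have "sign \<pi> = 1"
    unfolding \<pi>_def by (simp add: sign_compose permutation_swap_id sign_swap_id b(3) \<open>s1 \<noteq> s2\<close>)
  ultimately have "(\<lambda>p b. p (\<pi> b)) \<in> SO_P C lam"
    by (rule permutation_in_SO_P[OF finite_ballots[OF fin]])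
  moreover have "?r (\<pi> b) = ?r b" for b
  proof (cases "b \<in> {b1, b2, s1, s2}")
    case True
    then show ?thesis using b s by (auto simp: \<pi>_eq rvec_on_ballots)
  next
    case False
    then show ?thesis by (simp add: \<pi>_eq)
  qed
  moreover have "dipole b1 b2 d (\<pi> b) = dipole b2 b1 d b" for b
    using b(3) \<open>b1 \<noteq> s1\<close> \<open>b1 \<noteq> s2\<close> \<open>b2 \<noteq> s1\<close> \<open>b2 \<noteq> s2\<close> by (simp add: \<pi>_eq dipole_def)
  ultimately show ?thesis by (intro bexI[of _ "\<lambda>p b. p (\<pi> b)"]) auto
qed

lemma equivXY_condition_iff_const:
  assumes fin: "finite C" and XY: "X \<in> C" "Y \<in> C"
  shows "(\<forall>p\<in>profiles C lam. \<forall>q\<in>profiles C lam. equivXY C lam X Y p q \<longrightarrow>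
            pinner C lam p (vpair C lam w X Y) > 0 \<longrightarrow> pinner C lam q (vpair C lam w X Y) > 0)
     \<longleftrightarrow> const_on_X_above_Y C lam X Y (vpair C lam w X Y)"
    (is "?cond \<longleftrightarrow> ?const")
proof
  let ?v = "vpair C lam w X Y"
  assume cond: ?cond
  show ?const
  unfolding const_on_X_above_Y_def
  proof (intro ballI impI, rule ccontr)
    fix b1 b2 assume b: "b1 \<in> ballots C lam" "b2 \<in> ballots C lam" "b1 X < b1 Y" "b2 X < b2 Y"
      and ne: "?v b1 \<noteq> ?v b2"
    then have "b1 \<noteq> b2" by blast
    let ?u = "dipole b1 b2 (?v b1 - ?v b2)"
    have "pinner C lam ?u ?v > 0"
      using pinner_dipole_sign(1)[OF finite_ballots[OF fin] b(1,2) ne] .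
    moreover have "equivXY C lam X Y ?u (\<lambda>_. 0)"
      using b \<open>b1 \<noteq> b2\<close> by (simp add: equivXY_dipole_zero finite_ballots[OF fin])
    moreover have "(\<lambda>_. 0) \<in> profiles C lam" by (simp add: profiles_def)
    ultimately have "pinner C lam (\<lambda>_. 0) ?v > 0"
      using cond dipole_in_profiles[OF b(1,2)] by blast
    then show False by (simp add: pinner_def)
  qed
next
  assume ?const
  then obtain c where "\<forall>b\<in>ballots C lam. vpair C lam w X Y b = c * rvec C lam X Y b"
    using vpair_proportional_rvec[OF XY] by blast
  then show ?cond using equivXY_pinner_eq by metis
qed

lemma SO_P_condition_iff_const:
  assumes fin: "finite C" and XY: "X \<in> C" "Y \<in> C"
  shows "(\<forall>T\<in>SO_P C lam. T (rvec C lam X Y) = rvec C lam X Y \<longrightarrow>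
            T ` posHalf C lam (vpair C lam w X Y) \<subseteq> posHalf C lam (vpair C lam w X Y))
     \<longleftrightarrow> const_on_X_above_Y C lam X Y (vpair C lam w X Y)"
    (is "?cond \<longleftrightarrow> ?const")
proof
  let ?v = "vpair C lam w X Y"
  assume cond: ?cond
  show ?const
  unfolding const_on_X_above_Y_def
  proof (intro ballI impI, rule ccontr)
    fix b1 b2 assume b: "b1 \<in> ballots C lam" "b2 \<in> ballots C lam" "b1 X < b1 Y" "b2 X < b2 Y"
      and ne: "?v b1 \<noteq> ?v b2"
    then have "b1 \<noteq> b2" by blast
    let ?d = "?v b1 - ?v b2"
    obtain T where T_SO: "T \<in> SO_P C lam" "T (rvec C lam X Y) = rvec C lam X Y"
      and T: "T (dipole b1 b2 ?d) = dipole b2 b1 ?d"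
      using SO_P_fixing_rvec_swapping_dipole[OF fin XY b(1,2) \<open>b1 \<noteq> b2\<close> b(3,4)] by blast
    have "dipole b1 b2 ?d \<in> posHalf C lam ?v"
      using pinner_dipole_sign(1)[OF finite_ballots[OF fin] b(1,2) ne] dipole_in_profiles[OF b(1,2)]
      by (simp add: posHalf_def)
    with cond T_SO have "dipole b2 b1 ?d \<in> posHalf C lam ?v" by (auto simp flip: T)
    then show False
      using pinner_dipole_sign(2)[OF finite_ballots[OF fin] b(1,2) ne] by (simp add: posHalf_def)
  qed
next
  assume ?const
  then obtain c where c: "\<forall>b\<in>ballots C lam. vpair C lam w X Y b = c * rvec C lam X Y b"
    using vpair_proportional_rvec[OF XY] by blast
  show ?cond
  proof (intro ballI impI subsetI)
    fix T x assume T: "T \<in> SO_P C lam" "T (rvec C lam X Y) = rvec C lam X Y"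
      and "x \<in> T ` posHalf C lam (vpair C lam w X Y)"
    then obtain u where "u \<in> profiles C lam" "pinner C lam u (vpair C lam w X Y) > 0" "x = T u"
      by (auto simp: posHalf_def)
    moreover have "T u \<in> profiles C lam" using T(1) \<open>u \<in> profiles C lam\<close>
      by (simp add: SO_P_def plinear_def)
    ultimately show "x \<in> posHalf C lam (vpair C lam w X Y)"
      using SO_P_fixing_rvec_pinner[OF c T] by (simp add: posHalf_def)
  qed
qed

theorem mainTheorem7:
  fixes C :: "'c set" and n :: nat and lam :: "nat list" and w :: "nat \<Rightarrow> real"
    and X Y :: 'c
  assumes "finite C" and "card C = n" and "n \<ge> 2"
    and "is_composition lam n"
    and "X \<in> C" and "Y \<in> C" and "X \<noteq> Y"
  shows "(\<forall>p\<in>profiles C lam. \<forall>q\<in>profiles C lam.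
            equivXY C lam X Y p q \<longrightarrow>
            pinner C lam p (vpair C lam w X Y) > 0 \<longrightarrow>
            pinner C lam q (vpair C lam w X Y) > 0)
     \<longleftrightarrow>
         (\<forall>T\<in>SO_P C lam. T (rvec C lam X Y) = rvec C lam X Y \<longrightarrow>
            T ` posHalf C lam (vpair C lam w X Y) \<subseteq> posHalf C lam (vpair C lam w X Y))"
  using equivXY_condition_iff_const[OF assms(1,5,6)] SO_P_condition_iff_const[OF assms(1,5,6)]
  by simp

end
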